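(* Let $p=\phi(n)/n$, where $\phi$ is a function with $\phi(n)=o(n)$ and $\phi(n)\to\infty$ as $n\to\infty$. Then the average complexity $\mathbb{T}(n,p)$ of exhaustive search for maximum independent set on $G\sim\mathcal{G}(n,p)$ is subexponential in $n$ and satisfies $$\mathbb{T}(n,p)=O\left(\exp\left(n\cdot\frac{2\ln\phi(n)+\ln^2\phi(n)}{2\phi(n)}\right)\right).$$
   Context: $\mathcal{G}(n,p)$ is the binomial random graph on $n$ vertices in which each of the $\binom{n}{2}$ pairs of vertices is an edge with probability $p$, independently. Exhaustive search processes the vertices in a fixed order $v_1,\dots,v_n$ and builds a binary search tree: a node at level $i$ corresponds to a subset $P\subseteq\{v_1,\dots,v_i\}$, and it has the two children $P\cup\{v_{i+1}\}$ and $P$ at level $i+1$; a node is kept (and expanded) only if its subset is an independent set of $G$. $\mathbb{T}(n,p)$ denotes the expected number of nodes of this search tree when $G\sim\mathcal{G}(n,p)$. *)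

theory Defs
  imports "HOL-Probability.Probability" "HOL-Library.Landau_Symbols"
begin

text \<open>Vertices v_1,...,v_n are represented by 0,...,n-1 (v_(i+1) = i).
  A graph on these vertices is given by its edge indicator on pairs (i,j) with i < j < n.\<close>

definition vpairs :: "nat \<Rightarrow> (nat \<times> nat) set" where
  "vpairs n = {(i,j). i < j \<and> j < n}"

definition gnp :: "nat \<Rightarrow> real \<Rightarrow> (nat \<times> nat \<Rightarrow> bool) pmf" where
  "gnp n p = Pi_pmf (vpairs n) False (\<lambda>_. bernoulli_pmf p)"

definition indep_set :: "(nat \<times> nat \<Rightarrow> bool) \<Rightarrow> nat set \<Rightarrow> bool" where
  "indep_set G P \<longleftrightarrow> (\<forall>i\<in>P. \<forall>j\<in>P. i < j \<longrightarrow> \<not> G (i,j))"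

text \<open>Nodes of the exhaustive search tree: a node at level i (0 \<le> i \<le> n) is a subset
  P of {v_1,...,v_i} = {0..<i}; it is present iff P is independent
  (independence is hereditary, so every independent P at level i is reached from the root).\<close>
definition search_tree_nodes :: "nat \<Rightarrow> (nat \<times> nat \<Rightarrow> bool) \<Rightarrow> (nat \<times> nat set) set" where
  "search_tree_nodes n G = {(i, P). i \<le> n \<and> P \<subseteq> {0..<i} \<and> indep_set G P}"

definition T_avg :: "nat \<Rightarrow> real \<Rightarrow> real" where
  "T_avg n p = measure_pmf.expectation (gnp n p) (\<lambda>G. real (card (search_tree_nodes n G)))"

end

theory Submission
  imports Defs "HOL-Real_Asymp.Real_Asymp"
begin

text \<open>A set P of k vertices is independent with probability (1-p)^(k choose 2), so
  T(n,p) is at most (n+1) times the sum of these probabilities over all subsets of the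
  n vertices. Completing the square, p (k choose 2) \<ge> k L - (L+1/2)^2/(2p) for every L,
  hence the sum is at most exp((L+1/2)^2/(2p)) (1 + e^(-L))^n. With p = \<phi>/n and
  L = ln \<phi> the exponent becomes n (2 ln \<phi> + ln^2 \<phi>)/(2 \<phi>) up to lower order terms,
  and this is o(n) because \<phi> \<rightarrow> \<infinity>. Since the root is always a node, T(n,p) \<ge> 1, so
  ln T(n,p) lies between 0 and that exponent.\<close>

definition pairs_in :: "nat set \<Rightarrow> (nat \<times> nat) set" where
  "pairs_in P = {(i,j). i \<in> P \<and> j \<in> P \<and> i < j}"

lemma card_pairs_in:
  assumes "finite P"
  shows "card (pairs_in P) = card P choose 2"
proof -
  have "bij_betw (\<lambda>(i,j). {i,j}) (pairs_in P) {B. B \<subseteq> P \<and> card B = 2}"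
  proof (rule bij_betwI')
    fix x y assume "x \<in> pairs_in P" "y \<in> pairs_in P"
    then show "((case x of (i, j) \<Rightarrow> {i, j}) = (case y of (i, j) \<Rightarrow> {i, j})) = (x = y)"
      by (auto simp: pairs_in_def doubleton_eq_iff)
  next
    fix x assume "x \<in> pairs_in P"
    then show "(case x of (i, j) \<Rightarrow> {i, j}) \<in> {B. B \<subseteq> P \<and> card B = 2}"
      by (auto simp: pairs_in_def)
  next
    fix B assume "B \<in> {B. B \<subseteq> P \<and> card B = 2}"
    then obtain x y where "x < y" "B = {x,y}" "x \<in> P" "y \<in> P"
      by (auto simp: card_2_iff) (metis insert_commute linorder_neqE_nat)
    then show "\<exists>x\<in>pairs_in P. B = (case x of (i, j) \<Rightarrow> {i, j})"
      by (auto simp: pairs_in_def)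
  qed
  then have "card (pairs_in P) = card {B. B \<subseteq> P \<and> card B = 2}"
    by (rule bij_betw_same_card)
  also have "\<dots> = card P choose 2"
    using assms by (rule n_subsets)
  finally show ?thesis .
qed

lemma finite_vpairs: "finite (vpairs n)"
  by (rule finite_subset[of _ "{0..<n} \<times> {0..<n}"]) (auto simp: vpairs_def)

lemma finite_set_pmf_gnp: "finite (set_pmf (gnp n p))"
  using finite_vpairs by (auto simp: gnp_def set_Pi_pmf)

lemma prob_gnp_indep_set:
  assumes "0 \<le> p" "p \<le> 1" and "P \<subseteq> {0..<n}"
  shows "measure_pmf.prob (gnp n p) {G. indep_set G P} = (1 - p) ^ card (pairs_in P)"
proof -
  have sub: "pairs_in P \<subseteq> vpairs n"
    using assms(3) by (auto simp: pairs_in_def vpairs_def)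
  define B where "B = (\<lambda>e. if e \<in> pairs_in P then {False} else (UNIV :: bool set))"
  have "{G. indep_set G P} = Pi (vpairs n) B"
    using sub by (auto simp: indep_set_def B_def Pi_def pairs_in_def split: if_splits)
  then have "measure_pmf.prob (gnp n p) {G. indep_set G P}
      = (\<Prod>e\<in>vpairs n. measure_pmf.prob (bernoulli_pmf p) (B e))"
    unfolding gnp_def by (simp add: measure_Pi_pmf_Pi[OF finite_vpairs])
  also have "\<dots> = (\<Prod>e\<in>vpairs n. if e \<in> pairs_in P then 1 - p else 1)"
    by (intro prod.cong refl) (auto simp: B_def measure_pmf_single assms(1,2))
  also have "\<dots> = (1 - p) ^ card (pairs_in P)"
    using sub by (simp add: prod.If_cases finite_vpairs Int_absorb1)
  finally show ?thesis .
qed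

lemma sum_Pow_power_card:
  fixes r :: "'a :: comm_semiring_1"
  assumes "finite A"
  shows "(\<Sum>X\<in>Pow A. r ^ card X) = (1 + r) ^ card A"
proof -
  have "(\<Prod>x\<in>A. r + 1) = (\<Sum>X\<in>Pow A. (\<Prod>x\<in>X. r) * (\<Prod>x\<in>A - X. 1))"
    using assms by (rule prod_add)
  then show ?thesis
    by (simp add: add.commute)
qed

lemma card_search_tree_nodes_le:
  "card (search_tree_nodes n G) \<le> (n + 1) * card {P \<in> Pow {0..<n}. indep_set G P}"
proof -
  have "search_tree_nodes n G \<subseteq> {0..n} \<times> {P \<in> Pow {0..<n}. indep_set G P}"
    by (auto simp: search_tree_nodes_def)
  then have "card (search_tree_nodes n G) \<le> card ({0..n} \<times> {P \<in> Pow {0..<n}. indep_set G P})"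
    by (intro card_mono) auto
  then show ?thesis
    by (simp add: card_cartesian_product)
qed

lemma T_avg_le_sum:
  assumes "0 \<le> p" "p \<le> 1"
  shows "T_avg n p \<le> real (n + 1) * (\<Sum>P\<in>Pow {0..<n}. (1 - p) ^ (card P choose 2))"
proof -
  let ?M = "gnp n p"
  have int: "integrable (measure_pmf ?M) h" for h :: "_ \<Rightarrow> real"
    by (rule integrable_measure_pmf_finite[OF finite_set_pmf_gnp])
  have count: "real (card {P \<in> Pow {0..<n}. indep_set G P})
      = (\<Sum>P\<in>Pow {0..<n}. indicator {G. indep_set G P} G)" for G
    by (simp add: indicator_def sum.If_cases Int_def)
  have "T_avg n p \<le> measure_pmf.expectation ?M
      (\<lambda>G. real (n + 1) * (\<Sum>P\<in>Pow {0..<n}. indicator {G. indep_set G P} G))"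
    unfolding T_avg_def
  proof (intro integral_mono int)
    fix G
    show "real (card (search_tree_nodes n G))
        \<le> real (n + 1) * (\<Sum>P\<in>Pow {0..<n}. indicator {G. indep_set G P} G)"
      unfolding count[symmetric] of_nat_mult[symmetric] of_nat_le_iff
      by (rule card_search_tree_nodes_le)
  qed
  also have "\<dots> = real (n + 1) * (\<Sum>P\<in>Pow {0..<n}. measure_pmf.prob ?M {G. indep_set G P})"
    by (simp add: integral_sum int)
  also have "(\<Sum>P\<in>Pow {0..<n}. measure_pmf.prob ?M {G. indep_set G P})
      = (\<Sum>P\<in>Pow {0..<n}. (1 - p) ^ (card P choose 2))"
  proof (intro sum.cong refl)
    fix P assume "P \<in> Pow {0..<n}"
    then have "P \<subseteq> {0..<n}" "finite P"
      by (auto intro: finite_subset)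
    then show "measure_pmf.prob ?M {G. indep_set G P} = (1 - p) ^ (card P choose 2)"
      using assms by (simp add: prob_gnp_indep_set card_pairs_in)
  qed
  finally show ?thesis .
qed

lemma one_minus_power_choose_two_le:
  fixes p L :: real
  assumes "0 < p" "p \<le> 1"
  shows "(1 - p) ^ (k choose 2) \<le> exp ((L + 1/2)\<^sup>2 / (2 * p)) * exp (- L) ^ k"
proof -
  have "(1 - p) ^ (k choose 2) \<le> exp (- p) ^ (k choose 2)"
    using assms exp_ge_add_one_self[of "- p"] by (intro power_mono) auto
  also have "\<dots> = exp (- p * (real k * (real k - 1) / 2))"
    by (cases k) (auto simp: exp_of_nat_mult[symmetric] choose_two real_of_nat_div algebra_simps)
  also have "\<dots> \<le> exp ((L + 1/2)\<^sup>2 / (2 * p) - real k * L)"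
  proof -
    define y where "y = p * real k"
    have "p * y \<le> y"
      using assms by (simp add: y_def mult_left_le_one_le)
    \<comment> \<open>the gap is the square (y - (L + 1/2))^2 plus the slack y - p y\<close>
    then have "p * y - y\<^sup>2 \<le> (L + 1/2)\<^sup>2 - 2 * y * L"
      using zero_le_power2[of "y - (L + 1/2)"] by (simp add: power2_eq_square algebra_simps)
    moreover have "(- p * (real k * (real k - 1) / 2)) * (2 * p) = p * y - y\<^sup>2"
      by (simp add: y_def power2_eq_square field_simps)
    moreover have "((L + 1/2)\<^sup>2 / (2 * p) - real k * L) * (2 * p) = (L + 1/2)\<^sup>2 - 2 * y * L"
      using assms by (simp add: y_def field_simps)
    ultimately have "(- p * (real k * (real k - 1) / 2)) * (2 * p)
        \<le> ((L + 1/2)\<^sup>2 / (2 * p) - real k * L) * (2 * p)"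
      by linarith
    from mult_right_le_imp_le[OF this]
    have "- p * (real k * (real k - 1) / 2) \<le> (L + 1/2)\<^sup>2 / (2 * p) - real k * L"
      using assms by simp
    then show ?thesis
      by simp
  qed
  also have "\<dots> = exp ((L + 1/2)\<^sup>2 / (2 * p)) * exp (- L) ^ k"
    by (simp add: exp_diff exp_minus exp_of_nat_mult[symmetric] field_simps)
  finally show ?thesis .
qed

lemma T_avg_le_exp:
  fixes p L :: real
  assumes "0 < p" "p \<le> 1"
  shows "T_avg n p \<le> exp (ln (real n + 1) + (L + 1/2)\<^sup>2 / (2 * p) + real n * exp (- L))"
proof -
  let ?c = "exp ((L + 1/2)\<^sup>2 / (2 * p))"
  have "T_avg n p \<le> real (n + 1) * (\<Sum>P\<in>Pow {0..<n}. (1 - p) ^ (card P choose 2))"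
    using assms by (intro T_avg_le_sum) auto
  also have "\<dots> \<le> real (n + 1) * (\<Sum>P\<in>Pow {0..<n}. ?c * exp (- L) ^ card P)"
    using assms by (intro mult_left_mono sum_mono one_minus_power_choose_two_le) auto
  also have "\<dots> = real (n + 1) * (?c * (1 + exp (- L)) ^ n)"
    by (simp add: sum_distrib_left[symmetric] sum_Pow_power_card)
  also have "(1 + exp (- L)) ^ n \<le> exp (exp (- L)) ^ n"
    by (intro power_mono) (auto simp: add.commute exp_ge_add_one_self)
  also have "real (n + 1) * (?c * exp (exp (- L)) ^ n)
      = exp (ln (real n + 1) + (L + 1/2)\<^sup>2 / (2 * p) + real n * exp (- L))"
    by (simp add: exp_add exp_of_nat_mult[symmetric] mult.commute)
  finally show ?thesis
    by simp
qed

lemma one_le_T_avg: "1 \<le> T_avg n p"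
proof -
  have "measure_pmf.expectation (gnp n p) (\<lambda>_. 1) \<le> T_avg n p"
    unfolding T_avg_def
  proof (intro integral_mono integrable_measure_pmf_finite[OF finite_set_pmf_gnp])
    fix G
    have "(0, {}) \<in> search_tree_nodes n G"
      by (simp add: search_tree_nodes_def indep_set_def)
    moreover have "finite (search_tree_nodes n G)"
      by (rule finite_subset[of _ "{0..n} \<times> Pow {0..<n}"]) (auto simp: search_tree_nodes_def)
    ultimately show "1 \<le> real (card (search_tree_nodes n G))"
      by (metis One_nat_def Suc_leI card_gt_0_iff empty_iff of_nat_1 of_nat_le_iff)
  qed
  then show ?thesis
    by simp
qed

lemma exponent_absorbs_lower_order_terms:
  fixes w L :: real
  assumes "5 \<le> L" "16 \<le> w" "ln w \<le> w / 2"
  shows "ln (w * exp L + 1) + (L + 1/2)\<^sup>2 * w / 2 + w \<le> w * (L + L\<^sup>2 / 2)"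
proof -
  have "1 * 1 \<le> w * exp L"
    using assms by (intro mult_mono) auto
  then have "ln (w * exp L + 1) \<le> ln (2 * (w * exp L))"
    by (intro ln_mono) auto
  also have "\<dots> = ln 2 + ln w + L"
    using assms by (simp add: ln_mult)
  also have "ln (2::real) \<le> 1"
    using ln_le_minus_one[of 2] by simp
  finally have "ln (w * exp L + 1) \<le> 1 + ln w + L"
    by simp
  \<comment> \<open>this product absorbs the lower order terms 13 w / 8 + L + 1 into w L / 2\<close>
  moreover have "0 \<le> (w - 16) * (L / 2 - 13 / 8)"
    using assms by (intro mult_nonneg_nonneg) auto
  moreover have "(w - 16) * (L / 2 - 13 / 8) = L * w / 2 - 13 * w / 8 - 8 * L + 26"
    by (simp add: field_simps)
  moreover have "(L + 1/2)\<^sup>2 * w / 2 + w = w * L\<^sup>2 / 2 + L * w / 2 + 9 * w / 8"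
    by (simp add: power2_eq_square field_simps)
  moreover have "w * (L + L\<^sup>2 / 2) = L * w + w * L\<^sup>2 / 2"
    by (simp add: algebra_simps)
  ultimately show ?thesis
    using assms by linarith
qed

lemma T_avg_le_exp_phi:
  fixes f :: real
  assumes "exp 5 \<le> f" "16 \<le> real n / f" "ln (real n / f) \<le> real n / f / 2"
  shows "T_avg n (f / real n) \<le> exp (real n * ((2 * ln f + (ln f)\<^sup>2) / (2 * f)))"
proof -
  define L where "L = ln f"
  define w where "w = real n / f"
  have "0 < f"
    using assms(1) by (meson exp_gt_zero less_le_trans)
  have "5 \<le> L"
    using assms(1) \<open>0 < f\<close> by (simp add: L_def ln_ge_iff)
  have "16 \<le> w" "ln w \<le> w / 2"
    using assms(2,3) by (simp_all add: w_def)
  have n_eq: "real n = w * f"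
    using \<open>0 < f\<close> by (simp add: w_def)
  have f_eq: "f = exp L"
    using \<open>0 < f\<close> by (simp add: L_def)
  have p: "0 < f / real n" "f / real n \<le> 1"
    using \<open>0 < f\<close> \<open>16 \<le> w\<close> by (simp_all add: n_eq)
  have "T_avg n (f / real n) \<le> exp (ln (real n + 1) + (L + 1/2)\<^sup>2 / (2 * (f / real n))
      + real n * exp (- L))"
    using p by (rule T_avg_le_exp)
  also have "ln (real n + 1) + (L + 1/2)\<^sup>2 / (2 * (f / real n)) + real n * exp (- L)
      = ln (w * exp L + 1) + (L + 1/2)\<^sup>2 * w / 2 + w"
    using \<open>0 < f\<close> by (simp add: n_eq f_eq exp_minus)
  also have "\<dots> \<le> w * (L + L\<^sup>2 / 2)"
    using \<open>5 \<le> L\<close> \<open>16 \<le> w\<close> \<open>ln w \<le> w / 2\<close> by (rule exponent_absorbs_lower_order_terms)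
  also have "w * (L + L\<^sup>2 / 2) = real n * ((2 * ln f + (ln f)\<^sup>2) / (2 * f))"
    using \<open>0 < f\<close> by (simp add: w_def L_def field_simps)
  finally show ?thesis
    by simp
qed

lemma ln_bigo_and_bigo_exp_if_eventually_between:
  fixes f g :: "'a \<Rightarrow> real"
  assumes "eventually (\<lambda>x. 1 \<le> f x \<and> f x \<le> exp (g x)) F"
  shows "(\<lambda>x. ln (f x)) \<in> O[F](g)" and "f \<in> O[F](\<lambda>x. exp (g x))"
proof -
  show "(\<lambda>x. ln (f x)) \<in> O[F](g)"
  proof (rule bigoI[of _ 1])
    show "eventually (\<lambda>x. norm (ln (f x)) \<le> 1 * norm (g x)) F"
      using assms
    proof eventually_elim
      case (elim x)
      then have "ln (f x) \<le> ln (exp (g x))"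
        by (intro ln_mono) auto
      then show ?case
        using elim by simp
    qed
  qed
  show "f \<in> O[F](\<lambda>x. exp (g x))"
  proof (rule bigoI[of _ 1])
    show "eventually (\<lambda>x. norm (f x) \<le> 1 * norm (exp (g x))) F"
      using assms by eventually_elim simp
  qed
qed

lemma exponent_smallo:
  fixes \<phi> :: "nat \<Rightarrow> real"
  assumes "filterlim \<phi> at_top sequentially"
  shows "(\<lambda>n. real n * ((2 * ln (\<phi> n) + (ln (\<phi> n))\<^sup>2) / (2 * \<phi> n))) \<in> o(\<lambda>n. real n)"
proof -
  define h :: "real \<Rightarrow> real" where "h x = (2 * ln x + (ln x)\<^sup>2) / (2 * x)" for x
  have "(h \<longlongrightarrow> 0) at_top"
    unfolding h_def by real_asymp
  then have "((\<lambda>n. h (\<phi> n)) \<longlongrightarrow> 0) sequentially"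
    using assms by (rule filterlim_compose)
  then have "(\<lambda>n. h (\<phi> n)) \<in> o(\<lambda>_. 1)"
    by (intro smalloI_tendsto) auto
  then have "(\<lambda>n. h (\<phi> n) * real n) \<in> o(\<lambda>n. 1 * real n)"
    by (rule landau_o.small_big_mult) simp
  then have "(\<lambda>n. real n * h (\<phi> n)) \<in> o(\<lambda>n. real n)"
    by (simp add: mult.commute)
  then show ?thesis
    by (simp only: h_def)
qed

lemma eventually_T_avg_le_exp:
  fixes \<phi> :: "nat \<Rightarrow> real"
  assumes "\<phi> \<in> o(\<lambda>n. real n)" and "filterlim \<phi> at_top sequentially"
  shows "eventually (\<lambda>n. T_avg n (\<phi> n / real n)
      \<le> exp (real n * ((2 * ln (\<phi> n) + (ln (\<phi> n))\<^sup>2) / (2 * \<phi> n)))) sequentially"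
proof -
  have "((\<lambda>n. \<phi> n / real n) \<longlongrightarrow> 0) sequentially"
    using assms(1) by (rule smalloD_tendsto)
  moreover have "eventually (\<lambda>n. 0 < \<phi> n / real n) sequentially"
    using filterlim_at_top_dense[THEN iffD1, OF assms(2), rule_format, of 0] eventually_gt_at_top[of 0]
    by eventually_elim simp
  ultimately have "filterlim (\<lambda>n. inverse (\<phi> n / real n)) at_top sequentially"
    by (rule filterlim_inverse_at_top)
  then have "filterlim (\<lambda>n. real n / \<phi> n) at_top sequentially"
    by (simp only: inverse_divide)
  moreover have "eventually (\<lambda>w::real. 16 \<le> w \<and> ln w \<le> w / 2) at_top"
    by (intro eventually_conj) real_asymp+
  ultimately have "eventually (\<lambda>n. 16 \<le> real n / \<phi> n \<and> ln (real n / \<phi> n) \<le> real n / \<phi> n / 2) sequentially"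
    by (rule filterlim_iff[THEN iffD1, rule_format])
  moreover have "eventually (\<lambda>n. exp 5 \<le> \<phi> n) sequentially"
    using assms(2) by (simp add: filterlim_at_top)
  ultimately show ?thesis
    by eventually_elim (intro T_avg_le_exp_phi, auto)
qed

theorem lemma2:
  fixes \<phi> :: "nat \<Rightarrow> real"
  assumes "\<phi> \<in> o(\<lambda>n. real n)"
    and "filterlim \<phi> at_top sequentially"
  shows "(\<lambda>n. ln (T_avg n (\<phi> n / real n))) \<in> o(\<lambda>n. real n) \<and>
         (\<lambda>n. T_avg n (\<phi> n / real n)) \<in>
           O(\<lambda>n. exp (real n * ((2 * ln (\<phi> n) + (ln (\<phi> n))\<^sup>2) / (2 * \<phi> n))))"
proof -
  have "eventually (\<lambda>n. 1 \<le> T_avg n (\<phi> n / real n) \<and> T_avg n (\<phi> n / real n)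
      \<le> exp (real n * ((2 * ln (\<phi> n) + (ln (\<phi> n))\<^sup>2) / (2 * \<phi> n)))) sequentially"
    using eventually_T_avg_le_exp[OF assms] by eventually_elim (simp add: one_le_T_avg)
  note bounds = ln_bigo_and_bigo_exp_if_eventually_between[OF this]
  have "(\<lambda>n. ln (T_avg n (\<phi> n / real n))) \<in> o(\<lambda>n. real n)"
    using bounds(1) exponent_smallo[OF assms(2)] by (rule landau_o.big_small_trans)
  with bounds(2) show ?thesis
    by blast
qed

end
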